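(* A thin CW complex of positive dimension (i.e. one with $J_n\neq\emptyset$ for some $n\ge1$) is not reflexive.
   Context: A parametrization of a diffeological space $Y$ is a map from an open subset of a Euclidean space; $Y$ is reflexive if every parametrization $P$ such that $g\circ P$ is smooth for all smooth $g:Y\to\mathbb{R}$ is a plot. For $n\ge0$, $\mathbb{D}^{n,0}=\mathbb{R}^n$ and $\mathbb{S}^{n-1,0}=\{u\in\mathbb{R}^n:\|u\|\ge1\}$ (empty for $n=0$), with subset diffeologies. A thin CW complex is a diffeological space $X$ with subspaces $\emptyset=X^{(-1)}\subset X^{(0)}\subset\cdots$, index sets $J_n$ and smooth maps $h_n:\coprod_{j\in J_n}\mathbb{S}^{n-1,0}\to X^{(n-1)}$ such that each $X^{(n)}$ is the pushout in diffeological spaces of the inclusion $\coprod_j\mathbb{S}^{n-1,0}\hookrightarrow\coprod_j\mathbb{D}^{n,0}$ and $h_n$, and $X$ is the diffeological colimit of the $X^{(n)}$. *)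

theory Defs
  imports "HOL-Analysis.Analysis"
begin

text \<open>R^n is represented as the set of real sequences vanishing from index n on;
the product topology on nat \<Rightarrow> real restricts to the Euclidean topology on it.\<close>

definition Rn :: "nat \<Rightarrow> (nat \<Rightarrow> real) set" where
  "Rn n = {x. \<forall>i\<ge>n. x i = 0}"

definition open_in_Rn :: "nat \<Rightarrow> (nat \<Rightarrow> real) set \<Rightarrow> bool" where
  "open_in_Rn n U \<longleftrightarrow> U \<subseteq> Rn n \<and> openin (top_of_set (Rn n)) U"

definition sqnorm :: "nat \<Rightarrow> (nat \<Rightarrow> real) \<Rightarrow> real" where
  "sqnorm n u = (\<Sum>i<n. (u i)^2)"

fun Ck :: "nat \<Rightarrow> nat \<Rightarrow> (nat \<Rightarrow> real) set \<Rightarrow> ((nat \<Rightarrow> real) \<Rightarrow> real) \<Rightarrow> bool" where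
  "Ck 0 n U g = continuous_on U g"
| "Ck (Suc k) n U g = (continuous_on U g \<and>
     (\<forall>i<n. \<exists>g'. (\<forall>x\<in>U. ((\<lambda>t. g (x(i := x i + t))) has_real_derivative g' x) (at 0))
                 \<and> Ck k n U g'))"

definition Cinf :: "nat \<Rightarrow> (nat \<Rightarrow> real) set \<Rightarrow> ((nat \<Rightarrow> real) \<Rightarrow> real) \<Rightarrow> bool" where
  "Cinf n U g \<longleftrightarrow> (\<forall>k. Ck k n U g)"

definition smooth_map :: "nat \<Rightarrow> nat \<Rightarrow> (nat \<Rightarrow> real) set \<Rightarrow> ((nat \<Rightarrow> real) \<Rightarrow> (nat \<Rightarrow> real)) \<Rightarrow> bool" where
  "smooth_map m n V F \<longleftrightarrow> (\<forall>v\<in>V. F v \<in> Rn n) \<and> (\<forall>j<n. Cinf m V (\<lambda>v. F v j))"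

definition Sn0 :: "nat \<Rightarrow> (nat \<Rightarrow> real) set" where
  "Sn0 n = {u \<in> Rn n. sqnorm n u \<ge> 1}"

definition Bn0 :: "nat \<Rightarrow> (nat \<Rightarrow> real) set" where
  "Bn0 n = {u \<in> Rn n. sqnorm n u < 1}"

text \<open>A diffeology on a carrier X is a set D of plots (n, U, P), with U open in R^n and
P : U \<rightarrow> X. Values of P outside U are irrelevant (extensionality).\<close>

type_synonym 'a diffeology = "(nat \<times> (nat \<Rightarrow> real) set \<times> ((nat \<Rightarrow> real) \<Rightarrow> 'a)) set"

definition parametrization :: "'a set \<Rightarrow> nat \<Rightarrow> (nat \<Rightarrow> real) set \<Rightarrow> ((nat \<Rightarrow> real) \<Rightarrow> 'a) \<Rightarrow> bool" where
  "parametrization X n U P \<longleftrightarrow> open_in_Rn n U \<and> P ` U \<subseteq> X"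

definition diffeology :: "'a set \<Rightarrow> 'a diffeology \<Rightarrow> bool" where
  "diffeology X D \<longleftrightarrow>
     (\<forall>n U P. (n, U, P) \<in> D \<longrightarrow> parametrization X n U P)
   \<and> (\<forall>n U P Q. (n, U, P) \<in> D \<longrightarrow> (\<forall>x\<in>U. P x = Q x) \<longrightarrow> (n, U, Q) \<in> D)
   \<and> (\<forall>n U x. open_in_Rn n U \<longrightarrow> x \<in> X \<longrightarrow> (n, U, \<lambda>_. x) \<in> D)
   \<and> (\<forall>n U P. parametrization X n U P \<longrightarrow>
        (\<forall>r\<in>U. \<exists>V. open_in_Rn n V \<and> r \<in> V \<and> V \<subseteq> U \<and> (n, V, P) \<in> D) \<longrightarrow> (n, U, P) \<in> D)
   \<and> (\<forall>n U P m V F. (n, U, P) \<in> D \<longrightarrow> open_in_Rn m V \<longrightarrow> smooth_map m n V F \<longrightarrow> F ` V \<subseteq> U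
        \<longrightarrow> (m, V, P \<circ> F) \<in> D)"

definition smooth_real :: "'a set \<Rightarrow> 'a diffeology \<Rightarrow> ('a \<Rightarrow> real) \<Rightarrow> bool" where
  "smooth_real X D g \<longleftrightarrow> (\<forall>n U P. (n, U, P) \<in> D \<longrightarrow> Cinf n U (g \<circ> P))"

definition reflexive :: "'a set \<Rightarrow> 'a diffeology \<Rightarrow> bool" where
  "reflexive X D \<longleftrightarrow>
     (\<forall>n U P. parametrization X n U P \<longrightarrow>
        (\<forall>g. smooth_real X D g \<longrightarrow> Cinf n U (g \<circ> P)) \<longrightarrow> (n, U, P) \<in> D)"

text \<open>Xs 0 = X^(-1) = {}, Xs (Suc n) = X^(n); all Xs k are subsets of X carrying the subset
diffeology {(m,V,P) \<in> D. P ` V \<subseteq> Xs k}.  J n is the index set of n-cells and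
h n j : S^{n-1,0} \<rightarrow> X^(n-1) the attaching map of the j-th n-cell.\<close>

definition attaching_smooth ::
  "'a diffeology \<Rightarrow> (nat \<Rightarrow> 'a set) \<Rightarrow> nat \<Rightarrow> ((nat \<Rightarrow> real) \<Rightarrow> 'a) \<Rightarrow> bool" where
  "attaching_smooth D Xs n f \<longleftrightarrow>
     (\<forall>m V Q. open_in_Rn m V \<longrightarrow> smooth_map m n V Q \<longrightarrow> Q ` V \<subseteq> Sn0 n \<longrightarrow>
        (m, V, f \<circ> Q) \<in> D \<and> (f \<circ> Q) ` V \<subseteq> Xs n)"

text \<open>X^(n) is the pushout, in diffeological spaces, of the inclusion
\<coprod>_j S^{n-1,0} \<hookrightarrow> \<coprod>_j R^n and of h_n, with the inclusion X^(n-1) \<subseteq> X^(n) as one leg and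
Phi (the characteristic maps) as the other.  Written out: as a set, X^(n) is the disjoint
union of X^(n-1) and the Phi-image of the open cells, Phi being injective there and equal to
h on S^{n-1,0}; its diffeology is the quotient (pushforward) diffeology of
X^(n-1) \<amalg> \<coprod>_j R^n, i.e. plots are the parametrizations that locally are plots of X^(n-1)
or of the form Phi(j, Q) with Q a smooth map into R^n.\<close>
definition cell_pushout ::
  "'a set \<Rightarrow> 'a diffeology \<Rightarrow> (nat \<Rightarrow> 'a set) \<Rightarrow> nat \<Rightarrow> 'j set \<Rightarrow> ('j \<Rightarrow> (nat \<Rightarrow> real) \<Rightarrow> 'a)
     \<Rightarrow> ('j \<Rightarrow> (nat \<Rightarrow> real) \<Rightarrow> 'a) \<Rightarrow> bool" where
  "cell_pushout X D Xs n Jn hn Phi \<longleftrightarrow>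
     Xs n \<subseteq> Xs (Suc n) \<and> Xs (Suc n) \<subseteq> X
   \<and> (\<forall>j\<in>Jn. \<forall>u\<in>Sn0 n. Phi j u = hn j u)
   \<and> Xs (Suc n) = Xs n \<union> (\<lambda>(j, u). Phi j u) ` (Jn \<times> Bn0 n)
   \<and> inj_on (\<lambda>(j, u). Phi j u) (Jn \<times> Bn0 n)
   \<and> (\<lambda>(j, u). Phi j u) ` (Jn \<times> Bn0 n) \<inter> Xs n = {}
   \<and> (\<forall>m V P. parametrization (Xs (Suc n)) m V P \<longrightarrow>
        ((m, V, P) \<in> D \<longleftrightarrow>
         (\<forall>r\<in>V. \<exists>W. open_in_Rn m W \<and> r \<in> W \<and> W \<subseteq> V \<and>
            (((m, W, P) \<in> D \<and> P ` W \<subseteq> Xs n)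
             \<or> (\<exists>j\<in>Jn. \<exists>Q. smooth_map m n W Q \<and> (\<forall>w\<in>W. P w = Phi j (Q w)))))))"

text \<open>X is the diffeological colimit of the X^(n): as a set the union, and plots are the
parametrizations which locally are plots of some X^(n).\<close>
definition colimit_diffeology :: "'a set \<Rightarrow> 'a diffeology \<Rightarrow> (nat \<Rightarrow> 'a set) \<Rightarrow> bool" where
  "colimit_diffeology X D Xs \<longleftrightarrow>
     X = (\<Union>k. Xs k)
   \<and> (\<forall>m V P. parametrization X m V P \<longrightarrow>
        ((m, V, P) \<in> D \<longleftrightarrow>
         (\<forall>r\<in>V. \<exists>W. open_in_Rn m W \<and> r \<in> W \<and> W \<subseteq> V \<and>
            (\<exists>k. (m, W, P) \<in> D \<and> P ` W \<subseteq> Xs k))))"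

definition thin_CW ::
  "'a set \<Rightarrow> 'a diffeology \<Rightarrow> (nat \<Rightarrow> 'a set) \<Rightarrow> (nat \<Rightarrow> 'j set) \<Rightarrow> (nat \<Rightarrow> 'j \<Rightarrow> (nat \<Rightarrow> real) \<Rightarrow> 'a) \<Rightarrow> bool" where
  "thin_CW X D Xs J h \<longleftrightarrow>
     diffeology X D
   \<and> Xs 0 = {}
   \<and> (\<forall>n. \<forall>j\<in>J n. attaching_smooth D Xs n (h n j))
   \<and> (\<forall>n. \<exists>Phi. cell_pushout X D Xs n (J n) (h n) Phi)
   \<and> colimit_diffeology X D Xs"

end

(*
  Let n be the least positive dimension carrying a cell.  Then X^(n-1) = X^(0), and X^(0) is
  diffeologically discrete: its plots are locally constant.  Pick an n-cell with characteristic
  map Phi and consider the curve gamma(t) = Phi((1 - |t|) e_0), which starts on the boundary of the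
  cell and folds back into its interior on both sides of t = 0.

  gamma is not a plot: near t = 0 it would have to factor smoothly through Phi, and injectivity of
  Phi on the open cell forces the factorisation to be t |-> (1 - |t|) e_0, which has a kink.

  Yet g o gamma is smooth for every smooth g : X -> R.  Indeed f(s) = g(Phi(s e_0)) is smooth, and
  for s > 1 the point Phi(s e_0) lies on the attaching curve inside the discrete X^(0), so f is
  constant on (1, oo).  Hence all derivatives of f vanish at 1, and g o gamma = f(1 - |t|) is smooth.
*)

theory Submission
  imports Defs
begin

section \<open>The real line as the first coordinate axis\<close>

definition axis :: "real \<Rightarrow> nat \<Rightarrow> real" where
  "axis s = (\<lambda>i. if i = 0 then s else 0)"

lemma axis_0 [simp]: "axis s 0 = s"
  by (simp add: axis_def)

lemma axis_upd_0 [simp]: "(axis a)(0 := b) = axis b"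
  by (auto simp: axis_def)

lemma axis_eq_iff [simp]: "axis s = axis t \<longleftrightarrow> s = t"
  by (metis axis_0)

lemma axis_in_Rn: "1 \<le> n \<Longrightarrow> axis s \<in> Rn n"
  by (simp add: Rn_def axis_def)

lemma axis_coord_0: "x \<in> Rn (Suc 0) \<Longrightarrow> axis (x 0) = x"
  by (auto simp: Rn_def axis_def)

lemma Rn_one_eq_range_axis: "Rn (Suc 0) = range axis"
  by (auto simp: axis_in_Rn) (metis axis_coord_0 rangeI)

lemma sqnorm_axis: "1 \<le> n \<Longrightarrow> sqnorm n (axis s) = s\<^sup>2"
proof -
  assume "1 \<le> n"
  have "sqnorm n (axis s) = (\<Sum>i<n. if i = 0 then s\<^sup>2 else 0)"
    unfolding sqnorm_def by (rule sum.cong) (auto simp: axis_def)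
  with \<open>1 \<le> n\<close> show ?thesis
    by (simp add: sum.delta)
qed

lemma axis_in_Bn0: "1 \<le> n \<Longrightarrow> \<bar>s\<bar> < 1 \<Longrightarrow> axis s \<in> Bn0 n"
  by (simp add: Bn0_def axis_in_Rn sqnorm_axis abs_square_less_1)

lemma axis_in_Sn0: "1 \<le> n \<Longrightarrow> 1 \<le> \<bar>s\<bar> \<Longrightarrow> axis s \<in> Sn0 n"
  using abs_le_square_iff[of 1 s] by (simp add: Sn0_def axis_in_Rn sqnorm_axis)

lemma continuous_on_axis: "continuous_on A axis"
  unfolding axis_def
proof (intro continuous_on_coordinatewise_then_product)
  show "continuous_on A (\<lambda>x. if i = 0 then x else 0)" for i
    by (cases "i = 0") simp_all
qed

lemma continuous_on_axis_image_iff: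
  "continuous_on (axis ` I) G \<longleftrightarrow> continuous_on I (G \<circ> axis)"
proof
  assume "continuous_on I (G \<circ> axis)"
  then have "continuous_on (axis ` I) ((G \<circ> axis) \<circ> (\<lambda>x. x 0))"
    using continuous_on_compose[of "axis ` I" "\<lambda>x. x 0" "G \<circ> axis"]
    by (simp add: image_image continuous_on_subset[OF continuous_on_product_coordinates])
  then show "continuous_on (axis ` I) G"
    by (rule continuous_on_eq) auto
qed (rule continuous_on_compose[OF continuous_on_axis])

lemma open_in_Rn_axis_image: "open I \<Longrightarrow> open_in_Rn (Suc 0) (axis ` I)"
proof -
  assume "open I"
  then have "open ((\<lambda>x::nat \<Rightarrow> real. x 0) -` I)"
    using open_vimage[OF _ continuous_on_product_coordinates, of I 0] by simp
  moreover have "axis ` I = Rn (Suc 0) \<inter> (\<lambda>x. x 0) -` I"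
    by (auto simp: axis_in_Rn) (metis axis_coord_0 image_eqI)
  ultimately show ?thesis
    unfolding open_in_Rn_def by (auto intro: openin_open_Int)
qed

lemma open_vimage_axis: "open_in_Rn (Suc 0) W \<Longrightarrow> open (axis -` W)"
proof -
  assume "open_in_Rn (Suc 0) W"
  then obtain T where "open T" "W = Rn (Suc 0) \<inter> T"
    unfolding open_in_Rn_def openin_open by blast
  then show ?thesis
    using open_vimage[OF _ continuous_on_axis] by (simp add: vimage_Int axis_in_Rn vimage_def)
qed

lemma eventually_at_axis_in:
  assumes "open_in_Rn (Suc 0) W" "axis s \<in> W"
  shows "\<forall>\<^sub>F t in at s within S. axis t \<in> W"
  using eventually_at_in_open'[OF open_vimage_axis[OF assms(1)]] assms(2)
  by (auto intro: filter_leD[OF at_le, rotated])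

section \<open>Smooth functions of one real variable\<close>

lemma Ck_const: "Ck k m V (\<lambda>_. c)"
  by (induction k arbitrary: c) (auto intro!: exI[of _ "\<lambda>_. 0"])

fun Ck_real :: "nat \<Rightarrow> real set \<Rightarrow> (real \<Rightarrow> real) \<Rightarrow> bool" where
  "Ck_real 0 I f = continuous_on I f"
| "Ck_real (Suc k) I f = (continuous_on I f \<and>
     (\<exists>f'. (\<forall>x\<in>I. (f has_real_derivative f' x) (at x)) \<and> Ck_real k I f'))"

lemma Ck_real_imp_continuous_on: "Ck_real k I f \<Longrightarrow> continuous_on I f"
  by (cases k) auto

lemma Ck_real_const: "Ck_real k I (\<lambda>_. c)"
  by (induction k arbitrary: c) (auto intro!: exI[of _ "\<lambda>_. 0"])

lemma Ck_real_ident: "Ck_real k I (\<lambda>x. x)"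
  by (cases k) (auto intro!: exI[of _ "\<lambda>_. 1"] Ck_real_const)

lemma partial_derivative_along_axis_iff:
  "((\<lambda>t. G ((axis a)(0 := axis a 0 + t))) has_real_derivative D) (at 0)
   \<longleftrightarrow> ((G \<circ> axis) has_real_derivative D) (at a)"
  using DERIV_shift[of "G \<circ> axis" D 0 a] by (simp add: add.commute)

lemma Ck_one_axis_image_iff: "Ck k (Suc 0) (axis ` I) G \<longleftrightarrow> Ck_real k I (G \<circ> axis)"
proof (induction k arbitrary: G)
  case 0
  then show ?case by (simp add: continuous_on_axis_image_iff)
next
  case (Suc k)
  have "(\<exists>g'. (\<forall>x\<in>axis ` I. ((\<lambda>t. G (x(0 := x 0 + t))) has_real_derivative g' x) (at 0))
              \<and> Ck k (Suc 0) (axis ` I) g')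
     \<longleftrightarrow> (\<exists>f'. (\<forall>a\<in>I. ((G \<circ> axis) has_real_derivative f' a) (at a)) \<and> Ck_real k I f')"
    (is "?partial \<longleftrightarrow> ?ordinary")
  proof
    assume ?partial
    then show ?ordinary
      using Suc.IH partial_derivative_along_axis_iff by (metis comp_apply image_eqI)
  next
    assume ?ordinary
    then obtain f' where "\<forall>a\<in>I. ((G \<circ> axis) has_real_derivative f' a) (at a)" "Ck_real k I f'"
      by blast
    moreover have "(\<lambda>x. f' (x 0)) \<circ> axis = f'"
      by auto
    ultimately show ?partial
      using Suc.IH partial_derivative_along_axis_iff by (intro exI[of _ "\<lambda>x. f' (x 0)"]) auto
  qed
  then show ?case
    by (simp only: Ck.simps Ck_real.simps continuous_on_axis_image_iff less_Suc0 all_simps simp_thms)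
qed

lemma Cinf_one_iff: "Cinf (Suc 0) (Rn (Suc 0)) G \<longleftrightarrow> (\<forall>k. Ck_real k UNIV (G \<circ> axis))"
  by (simp add: Cinf_def Rn_one_eq_range_axis Ck_one_axis_image_iff)

lemma smooth_map_axis_into_Rn:
  assumes "1 \<le> n"
  shows "smooth_map (Suc 0) n (axis ` I) (\<lambda>x. axis (x 0))"
  unfolding smooth_map_def Cinf_def
proof (intro conjI ballI allI impI)
  show "axis (v 0) \<in> Rn n" for v
    using assms by (rule axis_in_Rn)
  show "Ck k (Suc 0) (axis ` I) (\<lambda>v. axis (v 0) i)" for i k
    using Ck_one_axis_image_iff[of k I "\<lambda>v. v 0"]
    by (cases "i = 0") (simp_all add: comp_def Ck_real_ident axis_def Ck_const)
qed

lemma constant_on_if_eventually_at_eq: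
  assumes "connected S" "\<And>a. a \<in> S \<Longrightarrow> \<forall>\<^sub>F x in at a. f x = f a"
  shows "f constant_on S"
proof (rule locally_constant_imp_constant[OF assms(1)])
  fix a
  assume "a \<in> S"
  then have "\<forall>\<^sub>F x in nhds a. f x = f a"
    using assms(2) by (simp add: eventually_nhds_conv_at)
  then obtain T where "open T" "a \<in> T" "\<forall>x\<in>T. f x = f a"
    unfolding eventually_nhds by blast
  moreover have "openin (top_of_set S) (S \<inter> T)"
    using \<open>open T\<close> by (rule openin_open_Int)
  ultimately show "\<exists>T. openin (top_of_set S) T \<and> a \<in> T \<and> (\<forall>x\<in>T. f x = f a)"
    using \<open>a \<in> S\<close> by blast
qed

(* fold_at_one 1 1 f t = f (1 - |t|).  The two coefficients are carried along because
   differentiation flips the sign on the half-line t >= 0 only. *)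
definition fold_at_one :: "real \<Rightarrow> real \<Rightarrow> (real \<Rightarrow> real) \<Rightarrow> real \<Rightarrow> real" where
  "fold_at_one a b f t = (if t \<in> {0..} then a * f (1 - t) else b * f (1 + t))"

lemma continuous_on_fold_at_one:
  assumes "continuous_on UNIV f" "a * f 1 = b * f 1"
  shows "continuous_on UNIV (fold_at_one a b f)"
proof -
  have "continuous_on ({0..} \<union> {..0}) (fold_at_one a b f)"
    unfolding fold_at_one_def
    by (intro continuous_on_cases continuous_intros continuous_on_compose2[OF assms(1)])
      (use assms(2) in auto)
  moreover have "{0..} \<union> {..0} = (UNIV :: real set)"
    by auto
  ultimately show ?thesis
    by simp
qed

lemma has_real_derivative_fold_at_one:
  assumes "\<And>x. (f has_real_derivative f' x) (at x)" "a * f 1 = b * f 1" "f' 1 = 0"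
  shows "(fold_at_one a b f has_real_derivative fold_at_one (- a) b f' t) (at t)"
proof -
  have "(fold_at_one a b f has_vector_derivative fold_at_one (- a) b f' t) (at t within UNIV)"
    unfolding fold_at_one_def
  proof (rule has_vector_derivative_If_within_closures[where T = "{..<0}"])
    show "((\<lambda>t. a * f (1 - t)) has_vector_derivative - a * f' (1 - t)) (at t within S)" for t S
      unfolding has_real_derivative_iff_has_vector_derivative[symmetric]
      by (rule DERIV_chain2[OF assms(1), THEN DERIV_cmult, THEN has_field_derivative_at_within,
            of "\<lambda>t. 1 - t" _ _ a, THEN DERIV_cong]) (auto intro!: derivative_eq_intros)
    show "((\<lambda>t. b * f (1 + t)) has_vector_derivative b * f' (1 + t)) (at t within S)" for t S
      unfolding has_real_derivative_iff_has_vector_derivative[symmetric]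
      by (rule DERIV_chain2[OF assms(1), THEN DERIV_cmult, THEN has_field_derivative_at_within,
            of "\<lambda>t. 1 + t" _ _ b, THEN DERIV_cong]) (auto intro!: derivative_eq_intros)
  qed (use assms(2,3) in auto)
  then show ?thesis
    by (simp add: has_real_derivative_iff_has_vector_derivative)
qed

lemma value_at_1_if_const_on_Ioi:
  fixes f :: "real \<Rightarrow> real"
  assumes "continuous_on UNIV f" "\<forall>s>1. f s = c"
  shows "f 1 = c"
  using continuous_constant_on_closure[of "{1<..}" f c 1] assms
  by (auto intro: continuous_on_subset)

lemma Ck_real_fold_at_one:
  assumes "Ck_real k UNIV f" "\<forall>s>1. f s = c" "a * c = b * c"
  shows "Ck_real k UNIV (fold_at_one a b f)"
  using assms
proof (induction k arbitrary: f a b c)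
  case 0
  then have "f 1 = c"
    using value_at_1_if_const_on_Ioi by simp
  with 0 show ?case
    using continuous_on_fold_at_one by simp
next
  case (Suc k)
  then obtain f' where cont: "continuous_on UNIV f"
    and f': "\<And>x. (f has_real_derivative f' x) (at x)" and "Ck_real k UNIV f'"
    by auto
  have "f 1 = c"
    using cont Suc.prems(2) by (rule value_at_1_if_const_on_Ioi)
  have f'_Ioi: "\<forall>s>1. f' s = 0"
  proof (intro allI impI)
    fix s :: real
    assume "s > 1"
    have "(f has_real_derivative 0) (at s)"
      by (rule has_field_derivative_transform_within_open[OF DERIV_const, where S = "{1<..}"])
        (use \<open>s > 1\<close> Suc.prems(2) in auto)
    then show "f' s = 0"
      using f' DERIV_unique by blast
  qed
  then have "f' 1 = 0"
    using Ck_real_imp_continuous_on[OF \<open>Ck_real k UNIV f'\<close>] value_at_1_if_const_on_Ioi by blast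
  then have "\<And>t. (fold_at_one a b f has_real_derivative fold_at_one (- a) b f' t) (at t)"
    using has_real_derivative_fold_at_one f' \<open>f 1 = c\<close> Suc.prems(3) by blast
  moreover have "Ck_real k UNIV (fold_at_one (- a) b f')"
    using Suc.IH[OF \<open>Ck_real k UNIV f'\<close> f'_Ioi] by simp
  ultimately show ?case
    using continuous_on_fold_at_one cont \<open>f 1 = c\<close> Suc.prems(3) by auto
qed

lemma not_has_real_derivative_kink:
  fixes q :: "real \<Rightarrow> real"
  assumes q: "(q has_real_derivative D) (at 0)" and kink: "\<forall>\<^sub>F t in at 0. q t = c - \<bar>t\<bar>"
  shows False
proof -
  have "((\<lambda>t. c - \<bar>t\<bar>) \<longlongrightarrow> c - \<bar>0\<bar>) (at (0::real))"
    by (intro tendsto_intros)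
  moreover have "\<forall>\<^sub>F t in at 0. c - \<bar>t\<bar> = q t"
    using kink by (simp add: eq_commute)
  ultimately have "(q \<longlongrightarrow> c) (at 0)"
    by (simp add: Lim_transform_eventually)
  moreover have "(q \<longlongrightarrow> q 0) (at 0)"
    using DERIV_isCont[OF q] by (simp add: isCont_def)
  ultimately have "q 0 = c"
    using tendsto_unique[OF trivial_limit_at] by blast
  then have quotient: "\<forall>\<^sub>F t in at 0. (q t - q 0) / t = - sgn t"
    using kink by (auto elim!: eventually_mono simp: sgn_if)
  have lim: "((\<lambda>t. (q t - q 0) / t) \<longlongrightarrow> D) (at 0)"
    using q by (simp add: DERIV_def)
  from quotient have "\<forall>\<^sub>F t in at_right 0. (q t - q 0) / t = - sgn t"
    and "\<forall>\<^sub>F t in at_left 0. (q t - q 0) / t = - sgn t"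
    by (simp_all add: eventually_at_split)
  moreover have "\<forall>\<^sub>F t in at_right 0. t > (0::real)" and "\<forall>\<^sub>F t in at_left 0. t < (0::real)"
    by (simp_all add: eventually_at_right_less eventually_at_left_field lt_ex)
  ultimately have "\<forall>\<^sub>F t in at_right 0. (q t - q 0) / t = -1"
    and "\<forall>\<^sub>F t in at_left 0. (q t - q 0) / t = 1"
    by (auto elim: eventually_elim2)
  then have "((\<lambda>t. (q t - q 0) / t) \<longlongrightarrow> -1) (at_right 0)"
    and "((\<lambda>t. (q t - q 0) / t) \<longlongrightarrow> 1) (at_left 0)"
    by (simp_all add: tendsto_eventually)
  moreover have "((\<lambda>t. (q t - q 0) / t) \<longlongrightarrow> D) (at_right 0)"
    and "((\<lambda>t. (q t - q 0) / t) \<longlongrightarrow> D) (at_left 0)"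
    by (simp_all add: tendsto_mono[OF at_le lim])
  ultimately have "D = -1" and "D = 1"
    using tendsto_unique[OF trivial_limit_at_right_real] tendsto_unique[OF trivial_limit_at_left_real]
    by blast+
  then show False
    by simp
qed

section \<open>Attaching cells\<close>

lemma cell_pushoutD:
  assumes "cell_pushout X D Xs n Jn hn Phi"
  shows "Xs n \<subseteq> Xs (Suc n)" "Xs (Suc n) \<subseteq> X" "\<forall>j\<in>Jn. \<forall>u\<in>Sn0 n. Phi j u = hn j u"
    "Xs (Suc n) = Xs n \<union> (\<lambda>(j, u). Phi j u) ` (Jn \<times> Bn0 n)"
    "inj_on (\<lambda>(j, u). Phi j u) (Jn \<times> Bn0 n)"
    "(\<lambda>(j, u). Phi j u) ` (Jn \<times> Bn0 n) \<inter> Xs n = {}"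
  using assms unfolding cell_pushout_def by - (elim conjE, assumption)+

lemma cell_pushout_plot_iff:
  assumes "cell_pushout X D Xs n Jn hn Phi" "parametrization (Xs (Suc n)) m V P"
  shows "(m, V, P) \<in> D \<longleftrightarrow>
    (\<forall>r\<in>V. \<exists>W. open_in_Rn m W \<and> r \<in> W \<and> W \<subseteq> V \<and>
       (((m, W, P) \<in> D \<and> P ` W \<subseteq> Xs n)
        \<or> (\<exists>j\<in>Jn. \<exists>Q. smooth_map m n W Q \<and> (\<forall>w\<in>W. P w = Phi j (Q w)))))"
  using assms unfolding cell_pushout_def by blast

lemma cell_pushout_no_cells: "cell_pushout X D Xs n {} hn Phi \<Longrightarrow> Xs (Suc n) = Xs n"
  by (simp add: cell_pushout_def)

lemma Rn_0: "Rn 0 = {\<lambda>_. 0}"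
  by (auto simp: Rn_def)

lemma attaching_smooth_image:
  assumes "attaching_smooth D Xs n f" "u \<in> Sn0 n"
  shows "f u \<in> Xs n"
proof -
  have "open_in_Rn 0 (Rn 0)"
    by (simp add: open_in_Rn_def)
  moreover have "smooth_map 0 n (Rn 0) (\<lambda>_. u)"
    using assms(2) by (simp add: smooth_map_def Sn0_def Cinf_def Ck_const)
  ultimately have "(f \<circ> (\<lambda>_. u)) ` Rn 0 \<subseteq> Xs n"
    using assms unfolding attaching_smooth_def by blast
  then show ?thesis
    by (simp add: Rn_0)
qed

definition locally_constant_plots :: "'a diffeology \<Rightarrow> 'a set \<Rightarrow> bool" where
  "locally_constant_plots D A \<longleftrightarrow>
     (\<forall>m V P. (m, V, P) \<in> D \<longrightarrow> P ` V \<subseteq> A \<longrightarrow>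
        (\<forall>r\<in>V. \<exists>W. open_in_Rn m W \<and> r \<in> W \<and> W \<subseteq> V \<and> (\<forall>w\<in>W. P w = P r)))"

lemma locally_constant_plots_zero_skeleton:
  assumes "diffeology X D" "Xs 0 = {}" and pushout: "cell_pushout X D Xs 0 J0 h0 Phi0"
  shows "locally_constant_plots D (Xs (Suc 0))"
  unfolding locally_constant_plots_def
proof (intro allI impI ballI)
  fix m V P r
  assume plot: "(m, V, P) \<in> D" and "P ` V \<subseteq> Xs (Suc 0)" and "r \<in> V"
  have "open_in_Rn m V"
    using assms(1) plot unfolding diffeology_def parametrization_def by (elim conjE) blast
  with \<open>P ` V \<subseteq> Xs (Suc 0)\<close> have "parametrization (Xs (Suc 0)) m V P"
    by (simp add: parametrization_def)
  from cell_pushout_plot_iff[OF pushout this, THEN iffD1, OF plot, rule_format, OF \<open>r \<in> V\<close>]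
  obtain W where W: "open_in_Rn m W" "r \<in> W" "W \<subseteq> V"
    and "((m, W, P) \<in> D \<and> P ` W \<subseteq> Xs 0)
         \<or> (\<exists>j\<in>J0. \<exists>Q. smooth_map m 0 W Q \<and> (\<forall>w\<in>W. P w = Phi0 j (Q w)))"
    by blast
  with \<open>Xs 0 = {}\<close> obtain j Q where "smooth_map m 0 W Q" and P: "\<forall>w\<in>W. P w = Phi0 j (Q w)"
    by blast
  then have "\<forall>w\<in>W. Q w = (\<lambda>_. 0)"
    unfolding smooth_map_def Rn_0 by blast
  with P W show "\<exists>W. open_in_Rn m W \<and> r \<in> W \<and> W \<subseteq> V \<and> (\<forall>w\<in>W. P w = P r)"
    by auto
qed

lemma skeleton_eq_zero_skeleton:
  assumes pushouts: "\<forall>k. \<exists>Phi. cell_pushout X D Xs k (J k) (h k) Phi"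
    and no_cells: "\<forall>k. 1 \<le> k \<and> k < n \<longrightarrow> J k = {}"
  shows "1 \<le> k \<Longrightarrow> k \<le> n \<Longrightarrow> Xs k = Xs (Suc 0)"
proof (induction k)
  case (Suc k)
  show ?case
  proof (cases "k = 0")
    case False
    with Suc.prems no_cells have "J k = {}"
      by simp
    moreover obtain Phi where "cell_pushout X D Xs k (J k) (h k) Phi"
      using pushouts by blast
    ultimately have "Xs (Suc k) = Xs k"
      using cell_pushout_no_cells by simp
    with False Suc show ?thesis
      by simp
  qed simp
qed simp

section \<open>A cell attached to a discrete skeleton\<close>

locale cell_on_discrete_skeleton =
  fixes X :: "'a set" and D :: "'a diffeology" and Xs :: "nat \<Rightarrow> 'a set"
    and n :: nat and Jn :: "'j set" and hn :: "'j \<Rightarrow> (nat \<Rightarrow> real) \<Rightarrow> 'a"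
    and Phi :: "'j \<Rightarrow> (nat \<Rightarrow> real) \<Rightarrow> 'a" and j :: 'j
  assumes positive_dim: "1 \<le> n"
    and pushout: "cell_pushout X D Xs n Jn hn Phi"
    and attaching: "\<forall>i\<in>Jn. attaching_smooth D Xs n (hn i)"
    and discrete_skeleton: "locally_constant_plots D (Xs n)"
    and cell: "j \<in> Jn"
begin

lemma characteristic_eq_attaching: "i \<in> Jn \<Longrightarrow> u \<in> Sn0 n \<Longrightarrow> Phi i u = hn i u"
  using cell_pushoutD(3)[OF pushout] by blast

lemma boundary_in_skeleton: "i \<in> Jn \<Longrightarrow> u \<in> Sn0 n \<Longrightarrow> Phi i u \<in> Xs n"
  using attaching attaching_smooth_image characteristic_eq_attaching by metis

lemma interior_not_in_skeleton: "i \<in> Jn \<Longrightarrow> u \<in> Bn0 n \<Longrightarrow> Phi i u \<notin> Xs n"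
  using cell_pushoutD(6)[OF pushout] by blast

lemma characteristic_in_skeleton: "i \<in> Jn \<Longrightarrow> u \<in> Rn n \<Longrightarrow> Phi i u \<in> Xs (Suc n)"
proof -
  assume "i \<in> Jn" "u \<in> Rn n"
  then have "u \<in> Bn0 n \<or> u \<in> Sn0 n"
    by (auto simp: Bn0_def Sn0_def)
  then show ?thesis
    using \<open>i \<in> Jn\<close> boundary_in_skeleton cell_pushoutD(1,4)[OF pushout] by blast
qed

lemma characteristic_injective:
  "i \<in> Jn \<Longrightarrow> i' \<in> Jn \<Longrightarrow> u \<in> Bn0 n \<Longrightarrow> u' \<in> Bn0 n \<Longrightarrow>
    Phi i u = Phi i' u' \<Longrightarrow> u = u'"
  using inj_onD[OF cell_pushoutD(5)[OF pushout], of "(i, u)" "(i', u')"] by auto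

lemma plot_characteristic_comp:
  assumes "i \<in> Jn" "open_in_Rn m V" "smooth_map m n V Q"
  shows "(m, V, Phi i \<circ> Q) \<in> D"
proof -
  have param: "parametrization (Xs (Suc n)) m V (Phi i \<circ> Q)"
    using assms characteristic_in_skeleton by (auto simp: parametrization_def smooth_map_def)
  show ?thesis
    unfolding cell_pushout_plot_iff[OF pushout param]
    by (intro ballI exI[of _ V] conjI disjI2 bexI[of _ i] exI[of _ Q]) (use assms in auto)
qed

definition kink_curve :: "(nat \<Rightarrow> real) \<Rightarrow> 'a" where
  "kink_curve x = Phi j (axis (1 - \<bar>x 0\<bar>))"

lemma kink_curve_axis [simp]: "kink_curve (axis t) = Phi j (axis (1 - \<bar>t\<bar>))"
  by (simp add: kink_curve_def)

lemma kink_curve_in_skeleton: "kink_curve x \<in> Xs (Suc n)"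
  unfolding kink_curve_def using cell characteristic_in_skeleton axis_in_Rn positive_dim by blast

lemma kink_curve_leaves_skeleton:
  assumes "open_in_Rn (Suc 0) W" "axis 0 \<in> W"
  shows "\<not> kink_curve ` W \<subseteq> Xs n"
proof -
  have "\<forall>\<^sub>F t in at_right 0. axis t \<in> W \<and> t \<in> {0<..<1}"
    using eventually_at_axis_in[OF assms] eventually_at_right_real[OF zero_less_one] by (rule eventually_conj)
  then obtain t where "axis t \<in> W" "0 < t" "t < 1"
    using eventually_happens' trivial_limit_at_right_real by fastforce
  moreover have "axis (1 - t) \<in> Bn0 n"
    using \<open>0 < t\<close> \<open>t < 1\<close> positive_dim by (intro axis_in_Bn0) auto
  ultimately show ?thesis
    using cell interior_not_in_skeleton by force
qed

lemma kink_curve_not_characteristic_comp: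
  assumes W: "open_in_Rn (Suc 0) W" "axis 0 \<in> W"
    and "i \<in> Jn" and Q: "smooth_map (Suc 0) n W Q" and comp: "\<forall>w\<in>W. kink_curve w = Phi i (Q w)"
  shows False
proof -
  have Q_on_axis: "Q (axis t) 0 = 1 - \<bar>t\<bar>" if "axis t \<in> W" "0 < \<bar>t\<bar>" "\<bar>t\<bar> < 1" for t
  proof -
    have interior: "axis (1 - \<bar>t\<bar>) \<in> Bn0 n"
      using that positive_dim by (intro axis_in_Bn0) auto
    have "Q (axis t) \<in> Rn n"
      using Q \<open>axis t \<in> W\<close> by (simp add: smooth_map_def)
    moreover have "Q (axis t) \<notin> Sn0 n"
      using boundary_in_skeleton[OF \<open>i \<in> Jn\<close>] interior_not_in_skeleton[OF cell interior]
        comp \<open>axis t \<in> W\<close> by force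
    ultimately have "Q (axis t) \<in> Bn0 n"
      by (auto simp: Bn0_def Sn0_def)
    then have "Q (axis t) = axis (1 - \<bar>t\<bar>)"
      using characteristic_injective[OF \<open>i \<in> Jn\<close> cell _ interior] comp \<open>axis t \<in> W\<close> by force
    then show ?thesis
      by simp
  qed
  have "\<forall>\<^sub>F t in at 0. axis t \<in> W \<and> t \<in> {-1<..<1} - {0}"
    using eventually_at_axis_in[OF W] eventually_at_in_open[of "{-1<..<1::real}" 0]
    by (auto intro: eventually_conj)
  then have "\<forall>\<^sub>F t in at 0. Q (axis t) 0 = 1 - \<bar>t\<bar>"
    by eventually_elim (auto intro: Q_on_axis)
  moreover obtain q' where "((\<lambda>t. Q (axis t) 0) has_real_derivative q') (at 0)"
  proof -
    have "Cinf (Suc 0) W (\<lambda>w. Q w 0)"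
      using Q positive_dim unfolding smooth_map_def by simp
    then have "Ck (Suc 0) (Suc 0) W (\<lambda>w. Q w 0)"
      unfolding Cinf_def by blast
    then show thesis
      using that W(2) by fastforce
  qed
  ultimately show False
    using not_has_real_derivative_kink by blast
qed

lemma kink_curve_not_plot: "(Suc 0, Rn (Suc 0), kink_curve) \<notin> D"
proof
  have "open_in_Rn (Suc 0) (Rn (Suc 0))" "axis 0 \<in> Rn (Suc 0)"
    by (simp_all add: open_in_Rn_def axis_in_Rn)
  then have param: "parametrization (Xs (Suc n)) (Suc 0) (Rn (Suc 0)) kink_curve"
    using kink_curve_in_skeleton by (auto simp: parametrization_def)
  assume "(Suc 0, Rn (Suc 0), kink_curve) \<in> D"
  from cell_pushout_plot_iff[OF pushout param, THEN iffD1, OF this, rule_format,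
      OF \<open>axis 0 \<in> Rn (Suc 0)\<close>]
  obtain W where "open_in_Rn (Suc 0) W" "axis 0 \<in> W" and
    "((Suc 0, W, kink_curve) \<in> D \<and> kink_curve ` W \<subseteq> Xs n)
     \<or> (\<exists>i\<in>Jn. \<exists>Q. smooth_map (Suc 0) n W Q \<and> (\<forall>w\<in>W. kink_curve w = Phi i (Q w)))"
    by blast
  then show False
    using kink_curve_leaves_skeleton kink_curve_not_characteristic_comp by blast
qed

lemma characteristic_locally_constant_outside_ball:
  assumes "1 < s"
  shows "\<forall>\<^sub>F t in at s. Phi j (axis t) = Phi j (axis s)"
proof -
  let ?V = "axis ` {1<..}" and ?L = "\<lambda>x. axis (x 0)"
  have "open_in_Rn (Suc 0) ?V"
    by (simp add: open_in_Rn_axis_image)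
  moreover have "smooth_map (Suc 0) n ?V ?L"
    using positive_dim by (rule smooth_map_axis_into_Rn)
  moreover have "?L ` ?V \<subseteq> Sn0 n"
    using positive_dim by (auto intro: axis_in_Sn0)
  ultimately have "(Suc 0, ?V, hn j \<circ> ?L) \<in> D" "(hn j \<circ> ?L) ` ?V \<subseteq> Xs n"
    using attaching cell unfolding attaching_smooth_def by simp_all
  moreover have "axis s \<in> ?V"
    using assms by simp
  ultimately obtain W where W: "open_in_Rn (Suc 0) W" "axis s \<in> W" "W \<subseteq> ?V"
    and const: "\<forall>w\<in>W. (hn j \<circ> ?L) w = (hn j \<circ> ?L) (axis s)"
    using discrete_skeleton unfolding locally_constant_plots_def by blast
  have "\<forall>\<^sub>F t in at s. axis t \<in> W"
    using W(1,2) by (rule eventually_at_axis_in)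
  then show ?thesis
  proof eventually_elim
    case (elim t)
    then have "1 < t"
      using W(3) by auto
    then show ?case
      using const[rule_format, OF elim] assms positive_dim cell characteristic_eq_attaching axis_in_Sn0
      by simp
  qed
qed

lemma smooth_real_comp_kink_curve:
  assumes "smooth_real X D g"
  shows "Cinf (Suc 0) (Rn (Suc 0)) (g \<circ> kink_curve)"
proof -
  define f where "f s = g (Phi j (axis s))" for s
  have "(Suc 0, Rn (Suc 0), Phi j \<circ> (\<lambda>x. axis (x 0))) \<in> D"
    using plot_characteristic_comp[OF cell open_in_Rn_axis_image[OF open_UNIV]
        smooth_map_axis_into_Rn[OF positive_dim]]
    by (simp add: Rn_one_eq_range_axis)
  then have "Cinf (Suc 0) (Rn (Suc 0)) (g \<circ> (Phi j \<circ> (\<lambda>x. axis (x 0))))"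
    using assms unfolding smooth_real_def by blast
  moreover have "g \<circ> (Phi j \<circ> (\<lambda>x. axis (x 0))) \<circ> axis = f"
    by (auto simp: f_def)
  ultimately have "\<forall>k. Ck_real k UNIV f"
    unfolding Cinf_one_iff by simp
  moreover have "f constant_on {1<..}"
  proof (rule constant_on_if_eventually_at_eq)
    show "\<forall>\<^sub>F t in at s. f t = f s" if "s \<in> {1<..}" for s
      using characteristic_locally_constant_outside_ball[of s] that
      by (auto simp: f_def elim: eventually_mono)
  qed simp
  then obtain c where "\<forall>s>1. f s = c"
    by (auto simp: constant_on_def)
  moreover have "(g \<circ> kink_curve) \<circ> axis = fold_at_one 1 1 f"
    by (auto simp: fold_at_one_def f_def)
  ultimately show ?thesis
    unfolding Cinf_one_iff by (auto intro: Ck_real_fold_at_one)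
qed

lemma not_reflexive: "\<not> reflexive X D"
proof
  have "parametrization X (Suc 0) (Rn (Suc 0)) kink_curve"
    using kink_curve_in_skeleton cell_pushoutD(2)[OF pushout]
    by (auto simp: parametrization_def open_in_Rn_def)
  moreover assume "reflexive X D"
  ultimately show False
    using smooth_real_comp_kink_curve kink_curve_not_plot unfolding reflexive_def by blast
qed

end

theorem corollary8p4:
  fixes X :: "'a set" and D :: "'a diffeology" and Xs :: "nat \<Rightarrow> 'a set"
    and J :: "nat \<Rightarrow> 'j set" and h :: "nat \<Rightarrow> 'j \<Rightarrow> (nat \<Rightarrow> real) \<Rightarrow> 'a"
  assumes "thin_CW X D Xs J h"
    and "\<exists>n\<ge>1. J n \<noteq> {}"
  shows "\<not> reflexive X D"
proof -
  have "diffeology X D" "Xs 0 = {}" and attaching: "\<forall>n. \<forall>j\<in>J n. attaching_smooth D Xs n (h n j)"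
    and pushouts: "\<forall>n. \<exists>Phi. cell_pushout X D Xs n (J n) (h n) Phi"
    using assms(1) unfolding thin_CW_def by - (elim conjE, assumption)+
  define n where "n = (LEAST n. 1 \<le> n \<and> J n \<noteq> {})"
  have "1 \<le> n \<and> J n \<noteq> {}"
    unfolding n_def by (rule LeastI_ex[OF assms(2)])
  moreover have "\<forall>k. 1 \<le> k \<and> k < n \<longrightarrow> J k = {}"
    using not_less_Least[where P = "\<lambda>n. 1 \<le> n \<and> J n \<noteq> {}"] unfolding n_def by blast
  ultimately have "Xs n = Xs (Suc 0)"
    using skeleton_eq_zero_skeleton pushouts by blast
  moreover have "locally_constant_plots D (Xs (Suc 0))"
    using locally_constant_plots_zero_skeleton \<open>diffeology X D\<close> \<open>Xs 0 = {}\<close> pushouts by blast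
  moreover obtain Phi where "cell_pushout X D Xs n (J n) (h n) Phi"
    using pushouts by blast
  moreover obtain j where "j \<in> J n"
    using \<open>1 \<le> n \<and> J n \<noteq> {}\<close> by blast
  ultimately interpret cell_on_discrete_skeleton X D Xs n "J n" "h n" Phi j
    using \<open>1 \<le> n \<and> J n \<noteq> {}\<close> attaching by unfold_locales simp_all
  show ?thesis
    by (rule not_reflexive)
qed

end
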